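(* If a finite group $G$ is a $Q\sigma T$-group, then every quotient $G/N$ of $G$ by a normal subgroup $N$ is also a $Q\sigma T$-group.
   Context: $\sigma=\{\sigma_i\mid i\in I\}$ is a partition of the set of all primes. A group is $\sigma$-primary if it is a $\sigma_i$-group for some $i$. $A_G$ is the core of $A$ in $G$. $A$ is $\sigma$-subnormal in $G$ if there is a chain $A=A_0\le\cdots\le A_n=G$ with, for each $i$, $A_{i-1}\trianglelefteq A_i$ or $A_i/(A_{i-1})_{A_i}$ $\sigma$-primary. $A$ is modular in $G$ if (1) $\langle X, A\cap Z\rangle=\langle X,A\rangle\cap Z$ for all $X\le Z\le G$, and (2) $\langle A, Y\cap Z\rangle=\langle A,Y\rangle\cap Z$ for all $Y,Z\le G$ with $A\le Z$. $A$ is $\sigma$-quasinormal in $G$ if it is $\sigma$-subnormal and modular. $G$ is a $Q\sigma T$-group if whenever $H$ is $\sigma$-quasinormal in $K$ and $K$ is $\sigma$-quasinormal in $G$, $H$ is $\sigma$-quasinormal in $G$. *)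

theory Defs
  imports "HOL-Algebra.Algebra" "HOL-Computational_Algebra.Primes"
begin

definition sigma_partition :: "nat set set \<Rightarrow> bool" where
  "sigma_partition \<Sigma> \<longleftrightarrow>
     (\<forall>s\<in>\<Sigma>. s \<noteq> {}) \<and> \<Union>\<Sigma> = {p. Factorial_Ring.prime (p::nat)} \<and>
     (\<forall>s\<in>\<Sigma>. \<forall>t\<in>\<Sigma>. s \<noteq> t \<longrightarrow> s \<inter> t = {})"

definition pi_group :: "nat set \<Rightarrow> ('a, 'b) monoid_scheme \<Rightarrow> bool" where
  "pi_group \<pi> H \<longleftrightarrow> (\<forall>p. Factorial_Ring.prime (p::nat) \<and> p dvd order H \<longrightarrow> p \<in> \<pi>)"

definition sigma_primary :: "nat set set \<Rightarrow> ('a, 'b) monoid_scheme \<Rightarrow> bool" where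
  "sigma_primary \<Sigma> H \<longleftrightarrow> (\<exists>s\<in>\<Sigma>. pi_group s H)"

definition core :: "('a, 'b) monoid_scheme \<Rightarrow> 'a set \<Rightarrow> 'a set" where
  "core G A = (\<Inter>g\<in>carrier G. (g <#\<^bsub>G\<^esub> A) #>\<^bsub>G\<^esub> inv\<^bsub>G\<^esub> g)"

definition sigma_subnormal :: "nat set set \<Rightarrow> ('a, 'b) monoid_scheme \<Rightarrow> 'a set \<Rightarrow> bool" where
  "sigma_subnormal \<Sigma> G A \<longleftrightarrow>
     (\<exists>(n::nat) (f::nat \<Rightarrow> 'a set). f 0 = A \<and> f n = carrier G \<and>
        (\<forall>i\<le>n. subgroup (f i) G) \<and>
        (\<forall>i<n. f i \<subseteq> f (Suc i) \<and>
           (f i \<lhd> G\<lparr>carrier := f (Suc i)\<rparr> \<or>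
            sigma_primary \<Sigma> ((G\<lparr>carrier := f (Suc i)\<rparr>) Mod (core (G\<lparr>carrier := f (Suc i)\<rparr>) (f i))))))"

definition modular_subgroup :: "('a, 'b) monoid_scheme \<Rightarrow> 'a set \<Rightarrow> bool" where
  "modular_subgroup G A \<longleftrightarrow> subgroup A G \<and>
     (\<forall>U W. subgroup U G \<longrightarrow> subgroup W G \<longrightarrow> U \<subseteq> W \<longrightarrow>
        generate G (U \<union> (A \<inter> W)) = generate G (U \<union> A) \<inter> W) \<and>
     (\<forall>V W. subgroup V G \<longrightarrow> subgroup W G \<longrightarrow> A \<subseteq> W \<longrightarrow>
        generate G (A \<union> (V \<inter> W)) = generate G (A \<union> V) \<inter> W)"

definition sigma_quasinormal :: "nat set set \<Rightarrow> ('a, 'b) monoid_scheme \<Rightarrow> 'a set \<Rightarrow> bool" where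
  "sigma_quasinormal \<Sigma> G A \<longleftrightarrow> subgroup A G \<and> sigma_subnormal \<Sigma> G A \<and> modular_subgroup G A"

definition QsigmaT :: "nat set set \<Rightarrow> ('a, 'b) monoid_scheme \<Rightarrow> bool" where
  "QsigmaT \<Sigma> G \<longleftrightarrow>
     (\<forall>H K. sigma_quasinormal \<Sigma> G K \<longrightarrow> sigma_quasinormal \<Sigma> (G\<lparr>carrier := K\<rparr>) H \<longrightarrow>
        sigma_quasinormal \<Sigma> G H)"

end

theory Submission
  imports Defs
begin

(* Taking unions of cosets, X |-> \<Union>X, identifies the subgroups of G/N with the subgroups of
   G containing N; this correspondence is compatible with generated subgroups, intersections,
   cores and the orders of the quotients by cores.  So if K is sigma-quasinormal in G/N and H is
   sigma-quasinormal in K = \<Union>K/N, then \<Union>K is sigma-quasinormal in G and \<Union>H in \<Union>K.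
   As G is a Q-sigma-T-group, \<Union>H is sigma-quasinormal, in particular modular, in G, and
   modularity descends to H in G/N; sigma-subnormality of H in G/N is just transitivity of
   sigma-subnormality.  Lifting modularity from G/N to G is the delicate step, because the
   modular identities in G involve subgroups P not containing N: they are replaced by NP, and N
   is removed again by Dedekind's law. *)

lemma (in group) set_mult_subgroup_subset:
  assumes "subgroup S G" "A \<subseteq> S" "B \<subseteq> S"
  shows "A <#> B \<subseteq> S"
  using mono_set_mult[OF assms(2,3), of G] subgroup_mult_id[OF assms(1)] by simp

lemma (in group) Dedekind_law_left:
  assumes C: "subgroup C G" and "A \<subseteq> C" "B \<subseteq> carrier G"
  shows "(A <#> B) \<inter> C = A <#> (B \<inter> C)"
proof
  have "A <#> (B \<inter> C) \<subseteq> A <#> B"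
    by (rule mono_set_mult) auto
  moreover have "A <#> (B \<inter> C) \<subseteq> C"
    by (rule set_mult_subgroup_subset[OF C]) (use assms in auto)
  ultimately show "A <#> (B \<inter> C) \<subseteq> (A <#> B) \<inter> C"
    by blast
  show "(A <#> B) \<inter> C \<subseteq> A <#> (B \<inter> C)"
  proof
    fix x assume "x \<in> (A <#> B) \<inter> C"
    then obtain a b where ab: "a \<in> A" "b \<in> B" "x = a \<otimes> b" and "x \<in> C"
      unfolding set_mult_def by blast
    have "a \<in> C" "a \<in> carrier G" "b \<in> carrier G"
      using ab assms subgroup.subset[OF C] by auto
    then have "b = inv a \<otimes> x"
      using ab(3) by (simp add: m_assoc[symmetric])
    then have "b \<in> C"
      using \<open>a \<in> C\<close> \<open>x \<in> C\<close> by (simp add: subgroup.m_closed subgroup.m_inv_closed C)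
    then show "x \<in> A <#> (B \<inter> C)"
      using ab unfolding set_mult_def by blast
  qed
qed

lemma (in group) Dedekind_law_right:
  assumes C: "subgroup C G" and "B \<subseteq> C" "A \<subseteq> carrier G"
  shows "(A <#> B) \<inter> C = (A \<inter> C) <#> B"
proof
  have "(A \<inter> C) <#> B \<subseteq> A <#> B"
    by (rule mono_set_mult) auto
  moreover have "(A \<inter> C) <#> B \<subseteq> C"
    by (rule set_mult_subgroup_subset[OF C]) (use assms in auto)
  ultimately show "(A \<inter> C) <#> B \<subseteq> (A <#> B) \<inter> C"
    by blast
  show "(A <#> B) \<inter> C \<subseteq> (A \<inter> C) <#> B"
  proof
    fix x assume "x \<in> (A <#> B) \<inter> C"
    then obtain a b where ab: "a \<in> A" "b \<in> B" "x = a \<otimes> b" and "x \<in> C"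
      unfolding set_mult_def by blast
    have "b \<in> C" "a \<in> carrier G" "b \<in> carrier G"
      using ab assms subgroup.subset[OF C] by auto
    then have "a = x \<otimes> inv b"
      using ab(3) by (simp add: m_assoc)
    then have "a \<in> C"
      using \<open>b \<in> C\<close> \<open>x \<in> C\<close> by (simp add: subgroup.m_closed subgroup.m_inv_closed C)
    then show "x \<in> (A \<inter> C) <#> B"
      using ab unfolding set_mult_def by blast
  qed
qed

lemma (in group) subgroup_generate_Un:
  assumes "subgroup K G" "subgroup L G"
  shows "subgroup (generate G (K \<union> L)) G"
  using assms by (intro generate_is_subgroup) (auto dest: subgroup.subset)

lemma order_FactGroup: "order (G Mod N) = card (rcosets\<^bsub>G\<^esub> N)"
  by (simp add: order_def FactGroup_def)

lemma (in group) core_eq: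
  assumes "A \<subseteq> carrier G"
  shows "core G A = {x \<in> carrier G. \<forall>g\<in>carrier G. inv g \<otimes> x \<otimes> g \<in> A}"
proof -
  have "x \<in> (g <# A) #> inv g \<longleftrightarrow> x \<in> carrier G \<and> inv g \<otimes> x \<otimes> g \<in> A"
    if g: "g \<in> carrier G" for g x
  proof
    assume "x \<in> (g <# A) #> inv g"
    then obtain a where a: "a \<in> A" "x = g \<otimes> a \<otimes> inv g"
      unfolding l_coset_def r_coset_def by blast
    then have "a \<in> carrier G" using assms by blast
    then show "x \<in> carrier G \<and> inv g \<otimes> x \<otimes> g \<in> A"
      using a g by (simp add: m_assoc[symmetric]) (simp add: m_assoc)
  next
    assume x: "x \<in> carrier G \<and> inv g \<otimes> x \<otimes> g \<in> A"
    then have "x = g \<otimes> (inv g \<otimes> x \<otimes> g) \<otimes> inv g"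
      using g by (simp add: m_assoc[symmetric]) (simp add: m_assoc)
    then show "x \<in> (g <# A) #> inv g"
      unfolding l_coset_def r_coset_def using x by blast
  qed
  then show ?thesis
    unfolding core_def by auto
qed

lemma (in group) subgroup_core:
  assumes "subgroup A G"
  shows "subgroup (core G A) G"
proof -
  have "subgroup ((g <# A) #> inv g) G" if "g \<in> carrier G" for g
    using subgroup_conjugation_is_surj1[of "inv g" A] that assms by simp
  then show ?thesis
    unfolding core_def by (intro subgroups_Inter) auto
qed

context normal
begin

lemma group_hom_rcos: "group_hom G (G Mod H) (\<lambda>x. H #> x)"
  by (simp add: group_hom_def group_hom_axioms_def is_group factorgroup_is_group r_coset_hom_Mod)

lemma subset_Union_FactGroup_subgroup:
  assumes "subgroup A (G Mod H)"
  shows "H \<subseteq> \<Union>A"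
  using subgroup.one_closed[OF assms] by auto

lemma image_rcos_Union:
  assumes "subgroup A (G Mod H)"
  shows "(\<lambda>x. H #> x) ` \<Union>A = A"
proof -
  have "rcosets\<^bsub>G\<lparr>carrier := \<Union>A\<rparr>\<^esub> H = (\<lambda>x. H #> x) ` \<Union>A"
    by (auto simp: RCOSETS_def)
  then show ?thesis
    using factgroup_subgroup_union_factor[OF assms] by simp
qed

lemma Union_image_rcos: "\<Union>((\<lambda>x. H #> x) ` S) = H <#> S"
  by (auto simp: r_coset_def set_mult_def)

lemma subgroup_image_rcos:
  assumes "subgroup S G"
  shows "subgroup ((\<lambda>x. H #> x) ` S) (G Mod H)"
  using group_hom.subgroup_img_is_subgroup[OF group_hom_rcos assms] .

lemma subgroup_set_mult:
  assumes "subgroup S G"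
  shows "subgroup (H <#> S) G"
  using factgroup_subgroup_union_subgroup[OF subgroup_image_rcos[OF assms]]
  by (simp add: Union_image_rcos)

lemma subset_set_mult:
  assumes "subgroup S G"
  shows "S \<subseteq> H <#> S" "H \<subseteq> H <#> S"
proof
  fix x assume x: "x \<in> S"
  then have "\<one> \<otimes> x \<in> H <#> S"
    unfolding set_mult_def using subgroup.one_closed[OF is_subgroup] by blast
  then show "x \<in> H <#> S"
    using x subgroup.subset[OF assms] by auto
next
  show "H \<subseteq> H <#> S"
  proof
    fix x assume x: "x \<in> H"
    then have "x \<otimes> \<one> \<in> H <#> S"
      unfolding set_mult_def using subgroup.one_closed[OF assms] by blast
    then show "x \<in> H <#> S"
      using x subset by auto
  qed
qed

lemma set_mult_absorb:
  assumes "subgroup S G" "H \<subseteq> S"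
  shows "H <#> S = S"
proof
  show "H <#> S \<subseteq> S"
    using set_mult_subgroup_subset[OF assms(1,2)] by blast
  show "S \<subseteq> H <#> S"
    by (rule subset_set_mult(1)[OF assms(1)])
qed

lemma Union_image_rcos_eq:
  assumes "subgroup S G" "H \<subseteq> S"
  shows "\<Union>((\<lambda>x. H #> x) ` S) = S"
  using Union_image_rcos set_mult_absorb[OF assms] by simp

lemma Union_FactGroup_inject:
  assumes "subgroup A (G Mod H)" "subgroup B (G Mod H)" "\<Union>A = \<Union>B"
  shows "A = B"
  using image_rcos_Union assms by metis

lemma Union_FactGroup_Int:
  assumes "subgroup A (G Mod H)" "subgroup B (G Mod H)"
  shows "\<Union>(A \<inter> B) = \<Union>A \<inter> \<Union>B"
proof -
  interpret Q: group "G Mod H" by (rule factorgroup_is_group)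
  show ?thesis
    using factgroup_subgroup_union_char Q.subgroups_Inter_pair assms by auto
qed

lemma Union_generate_Un:
  assumes A: "subgroup A (G Mod H)" and B: "subgroup B (G Mod H)"
  shows "\<Union>(generate (G Mod H) (A \<union> B)) = generate G (\<Union>A \<union> \<Union>B)"
proof -
  let ?T = "generate G (\<Union>A \<union> \<Union>B)"
  have AB: "\<Union>A \<union> \<Union>B \<subseteq> carrier G"
    using factgroup_subgroup_union_subgroup[OF A] factgroup_subgroup_union_subgroup[OF B]
    by (simp add: subgroup.subset)
  have "H \<subseteq> ?T"
    using subset_Union_FactGroup_subgroup[OF A] generate.incl[of _ "\<Union>A \<union> \<Union>B" G] by blast
  moreover have "A \<union> B = (\<lambda>x. H #> x) ` (\<Union>A \<union> \<Union>B)"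
    by (simp add: image_Un image_rcos_Union A B)
  ultimately show ?thesis
    using group_hom.generate_img[OF group_hom_rcos AB] Union_image_rcos_eq[OF generate_is_subgroup[OF AB]]
    by simp
qed

lemma modular_subgroup_FactGroupI:
  assumes A: "subgroup A (G Mod H)" and mod: "modular_subgroup G (\<Union>A)"
  shows "modular_subgroup (G Mod H) A"
proof -
  interpret Q: group "G Mod H" by (rule factorgroup_is_group)
  note lift = factgroup_subgroup_union_subgroup
  note join = Q.subgroup_generate_Un and meet = Q.subgroups_Inter_pair
  show ?thesis
    unfolding modular_subgroup_def
  proof (intro conjI allI impI)
    fix U W assume U: "subgroup U (G Mod H)" and W: "subgroup W (G Mod H)" and "U \<subseteq> W"
    have "\<Union>(generate (G Mod H) (U \<union> (A \<inter> W))) = generate G (\<Union>U \<union> (\<Union>A \<inter> \<Union>W))"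
      by (simp add: Union_generate_Un Union_FactGroup_Int U A W meet)
    also have "\<dots> = generate G (\<Union>U \<union> \<Union>A) \<inter> \<Union>W"
      using mod lift[OF U] lift[OF W] Union_mono[OF \<open>U \<subseteq> W\<close>]
      unfolding modular_subgroup_def by simp
    also have "\<dots> = \<Union>(generate (G Mod H) (U \<union> A) \<inter> W)"
      by (simp add: Union_generate_Un Union_FactGroup_Int U A W join)
    finally show "generate (G Mod H) (U \<union> (A \<inter> W)) = generate (G Mod H) (U \<union> A) \<inter> W"
      by (rule Union_FactGroup_inject[OF join[OF U meet[OF A W]] meet[OF join[OF U A] W]])
  next
    fix V W assume V: "subgroup V (G Mod H)" and W: "subgroup W (G Mod H)" and "A \<subseteq> W"
    have "\<Union>(generate (G Mod H) (A \<union> (V \<inter> W))) = generate G (\<Union>A \<union> (\<Union>V \<inter> \<Union>W))"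
      by (simp add: Union_generate_Un Union_FactGroup_Int V A W meet)
    also have "\<dots> = generate G (\<Union>A \<union> \<Union>V) \<inter> \<Union>W"
      using mod lift[OF V] lift[OF W] Union_mono[OF \<open>A \<subseteq> W\<close>]
      unfolding modular_subgroup_def by simp
    also have "\<dots> = \<Union>(generate (G Mod H) (A \<union> V) \<inter> W)"
      by (simp add: Union_generate_Un Union_FactGroup_Int V A W join)
    finally show "generate (G Mod H) (A \<union> (V \<inter> W)) = generate (G Mod H) (A \<union> V) \<inter> W"
      by (rule Union_FactGroup_inject[OF join[OF A meet[OF V W]] meet[OF join[OF A V] W]])
  qed (rule A)
qed

lemma generate_Un_Union_Int_FactGroup:
  assumes A: "subgroup A (G Mod H)" and mod: "modular_subgroup (G Mod H) A"
    and U: "subgroup U G" and W: "subgroup W G" and "H \<subseteq> U" "U \<subseteq> W"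
  shows "generate G (U \<union> (\<Union>A \<inter> W)) = generate G (U \<union> \<Union>A) \<inter> W"
proof -
  interpret Q: group "G Mod H" by (rule factorgroup_is_group)
  let ?U = "(\<lambda>x. H #> x) ` U" and ?W = "(\<lambda>x. H #> x) ` W"
  have U': "subgroup ?U (G Mod H)" and W': "subgroup ?W (G Mod H)"
    using subgroup_image_rcos U W by auto
  have "\<Union>?U = U" "\<Union>?W = W"
    using Union_image_rcos_eq[OF U] Union_image_rcos_eq[OF W] assms(5,6) by blast+
  moreover have "?U \<subseteq> ?W"
    using \<open>U \<subseteq> W\<close> by blast
  then have "generate (G Mod H) (?U \<union> (A \<inter> ?W)) = generate (G Mod H) (?U \<union> A) \<inter> ?W"
    using mod U' W' unfolding modular_subgroup_def by simp
  then have "\<Union>(generate (G Mod H) (?U \<union> (A \<inter> ?W))) = \<Union>(generate (G Mod H) (?U \<union> A) \<inter> ?W)"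
    by simp
  ultimately show ?thesis
    by (simp add: Union_generate_Un Union_FactGroup_Int U' W' A Q.subgroups_Inter_pair Q.subgroup_generate_Un)
qed

lemma generate_Union_Un_Int_FactGroup:
  assumes A: "subgroup A (G Mod H)" and mod: "modular_subgroup (G Mod H) A"
    and V: "subgroup V G" and W: "subgroup W G" and "H \<subseteq> V" "\<Union>A \<subseteq> W"
  shows "generate G (\<Union>A \<union> (V \<inter> W)) = generate G (\<Union>A \<union> V) \<inter> W"
proof -
  interpret Q: group "G Mod H" by (rule factorgroup_is_group)
  let ?V = "(\<lambda>x. H #> x) ` V" and ?W = "(\<lambda>x. H #> x) ` W"
  have V': "subgroup ?V (G Mod H)" and W': "subgroup ?W (G Mod H)"
    using subgroup_image_rcos V W by auto
  have "H \<subseteq> W"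
    using subset_Union_FactGroup_subgroup[OF A] \<open>\<Union>A \<subseteq> W\<close> by blast
  then have "\<Union>?V = V" "\<Union>?W = W"
    using Union_image_rcos_eq[OF V] Union_image_rcos_eq[OF W] \<open>H \<subseteq> V\<close> by blast+
  moreover have "A \<subseteq> ?W"
    using image_rcos_Union[OF A] \<open>\<Union>A \<subseteq> W\<close> by blast
  then have "generate (G Mod H) (A \<union> (?V \<inter> ?W)) = generate (G Mod H) (A \<union> ?V) \<inter> ?W"
    using mod V' W' unfolding modular_subgroup_def by simp
  then have "\<Union>(generate (G Mod H) (A \<union> (?V \<inter> ?W))) = \<Union>(generate (G Mod H) (A \<union> ?V) \<inter> ?W)"
    by simp
  ultimately show ?thesis
    by (simp add: Union_generate_Un Union_FactGroup_Int V' W' A Q.subgroups_Inter_pair Q.subgroup_generate_Un)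
qed

lemma generate_Un_Union_Int:
  assumes A: "subgroup A (G Mod H)" and mod: "modular_subgroup (G Mod H) A"
    and P: "subgroup P G" and Z: "subgroup Z G" and "P \<subseteq> Z"
  shows "generate G (P \<union> (\<Union>A \<inter> Z)) = generate G (P \<union> \<Union>A) \<inter> Z"
proof
  let ?M = "\<Union>A" and ?T = "generate G (P \<union> (\<Union>A \<inter> Z))"
  have M: "subgroup ?M G" and HM: "H \<subseteq> ?M"
    using factgroup_subgroup_union_subgroup[OF A] subset_Union_FactGroup_subgroup[OF A] .
  have T: "subgroup ?T G"
    using subgroup.subset[OF P] subgroup.subset[OF M] by (intro generate_is_subgroup) blast
  have PT: "P \<subseteq> ?T" and MZT: "?M \<inter> Z \<subseteq> ?T"
    using generate.incl[of _ "P \<union> (?M \<inter> Z)" G] by blast+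
  have T_Z: "?T \<subseteq> Z"
    by (rule generate_subgroup_incl[OF _ Z]) (use \<open>P \<subseteq> Z\<close> in blast)
  then show "?T \<subseteq> generate G (P \<union> ?M) \<inter> Z"
    using mono_generate[of "P \<union> (?M \<inter> Z)" "P \<union> ?M"] by blast
  have "generate G (P \<union> ?M) \<inter> Z \<subseteq> (generate G ((H <#> P) \<union> ?M) \<inter> (H <#> Z)) \<inter> Z"
    using mono_generate[of "P \<union> ?M" "(H <#> P) \<union> ?M"] subset_set_mult[OF P] subset_set_mult[OF Z]
    by blast
  also have "\<dots> = generate G ((H <#> P) \<union> (?M \<inter> (H <#> Z))) \<inter> Z"
  proof -
    have "H <#> P \<subseteq> H <#> Z"
      by (rule mono_set_mult) (use \<open>P \<subseteq> Z\<close> in auto)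
    then show ?thesis
      using generate_Un_Union_Int_FactGroup[OF A mod subgroup_set_mult[OF P] subgroup_set_mult[OF Z]]
        subset_set_mult(2)[OF P] by simp
  qed
  also have "\<dots> \<subseteq> (H <#> ?T) \<inter> Z"
  proof -
    have "?M \<inter> (H <#> Z) = H <#> (Z \<inter> ?M)"
      using Dedekind_law_left[OF M HM subgroup.subset[OF Z]] by (simp add: Int_commute)
    then have "(H <#> P) \<union> (?M \<inter> (H <#> Z)) \<subseteq> H <#> ?T"
      using mono_set_mult[of H H P ?T G] mono_set_mult[of H H "Z \<inter> ?M" ?T G] PT MZT
      by (auto simp: Int_commute)
    then have "generate G ((H <#> P) \<union> (?M \<inter> (H <#> Z))) \<subseteq> H <#> ?T"
      by (rule generate_subgroup_incl[OF _ subgroup_set_mult[OF T]])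
    then show ?thesis by blast
  qed
  also have "\<dots> = (H \<inter> Z) <#> ?T"
    by (rule Dedekind_law_right[OF Z T_Z subset])
  also have "\<dots> \<subseteq> ?T"
    using set_mult_subgroup_subset[OF T, of "H \<inter> Z" ?T] HM MZT by blast
  finally show "generate G (P \<union> ?M) \<inter> Z \<subseteq> ?T" .
qed

lemma generate_Union_Un_Int:
  assumes A: "subgroup A (G Mod H)" and mod: "modular_subgroup (G Mod H) A"
    and V: "subgroup V G" and Z: "subgroup Z G" and "\<Union>A \<subseteq> Z"
  shows "generate G (\<Union>A \<union> (V \<inter> Z)) = generate G (\<Union>A \<union> V) \<inter> Z"
proof
  let ?M = "\<Union>A" and ?T = "generate G (\<Union>A \<union> (V \<inter> Z))"
  have M: "subgroup ?M G" and HM: "H \<subseteq> ?M"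
    using factgroup_subgroup_union_subgroup[OF A] subset_Union_FactGroup_subgroup[OF A] .
  have T: "subgroup ?T G"
    using subgroup.subset[OF M] subgroup.subset[OF V] by (intro generate_is_subgroup) blast
  have MT: "?M \<subseteq> ?T" and VZT: "V \<inter> Z \<subseteq> ?T"
    using generate.incl[of _ "?M \<union> (V \<inter> Z)" G] by blast+
  have HZ: "H \<subseteq> Z"
    using HM \<open>?M \<subseteq> Z\<close> by blast
  have "?T \<subseteq> Z"
    by (rule generate_subgroup_incl[OF _ Z]) (use \<open>?M \<subseteq> Z\<close> in blast)
  then show "?T \<subseteq> generate G (?M \<union> V) \<inter> Z"
    using mono_generate[of "?M \<union> (V \<inter> Z)" "?M \<union> V"] by blast
  have "generate G (?M \<union> V) \<inter> Z \<subseteq> generate G (?M \<union> (H <#> V)) \<inter> Z"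
    using mono_generate[of "?M \<union> V" "?M \<union> (H <#> V)"] subset_set_mult[OF V] by blast
  also have "\<dots> = generate G (?M \<union> ((H <#> V) \<inter> Z))"
    using generate_Union_Un_Int_FactGroup[OF A mod subgroup_set_mult[OF V] Z]
      subset_set_mult[OF V] \<open>?M \<subseteq> Z\<close> by simp
  also have "\<dots> \<subseteq> ?T"
  proof (rule generate_subgroup_incl[OF _ T])
    have "(H <#> V) \<inter> Z = H <#> (V \<inter> Z)"
      by (rule Dedekind_law_left[OF Z HZ subgroup.subset[OF V]])
    also have "\<dots> \<subseteq> ?T"
      using set_mult_subgroup_subset[OF T, of H "V \<inter> Z"] HM MT VZT by blast
    finally show "?M \<union> ((H <#> V) \<inter> Z) \<subseteq> ?T"
      using MT by blast
  qed
  finally show "generate G (?M \<union> V) \<inter> Z \<subseteq> ?T" .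
qed

lemma modular_subgroup_Union:
  assumes A: "subgroup A (G Mod H)" and mod: "modular_subgroup (G Mod H) A"
  shows "modular_subgroup G (\<Union>A)"
  unfolding modular_subgroup_def
  by (simp add: factgroup_subgroup_union_subgroup[OF A] generate_Un_Union_Int[OF A mod]
      generate_Union_Un_Int[OF A mod])

lemma core_Union:
  assumes A: "subgroup A (G Mod H)"
  shows "core G (\<Union>A) = \<Union>(core (G Mod H) A)"
proof -
  interpret Q: group "G Mod H" by (rule factorgroup_is_group)
  have C: "subgroup (core (G Mod H) A) (G Mod H)"
    by (rule Q.subgroup_core[OF A])
  have conj: "inv\<^bsub>G Mod H\<^esub> (H #> g) \<otimes>\<^bsub>G Mod H\<^esub> (H #> x) \<otimes>\<^bsub>G Mod H\<^esub> (H #> g) = H #> (inv g \<otimes> x \<otimes> g)"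
    if "x \<in> carrier G" "g \<in> carrier G" for x g
    using that by (simp add: inv_FactGroup carrier_FactGroup rcos_inv rcos_sum)
  have "core G (\<Union>A) = {x \<in> carrier G. \<forall>g\<in>carrier G. H #> (inv g \<otimes> x \<otimes> g) \<in> A}"
    using core_eq[of "\<Union>A"] factgroup_subgroup_union_char[OF A] by auto
  also have "\<dots> = {x \<in> carrier G. H #> x \<in> core (G Mod H) A}"
    using Q.core_eq[of A] subgroup.subset[OF A] conj by (auto simp: carrier_FactGroup)
  also have "\<dots> = \<Union>(core (G Mod H) A)"
    by (rule factgroup_subgroup_union_char[OF C, symmetric])
  finally show ?thesis .
qed

lemma order_FactGroup_Union:
  assumes fin: "finite (carrier G)" and C: "subgroup C (G Mod H)"
  shows "order (G Mod \<Union>C) = order ((G Mod H) Mod C)"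
proof -
  interpret Q: group "G Mod H" by (rule factorgroup_is_group)
  have UC: "subgroup (\<Union>C) G"
    by (rule factgroup_subgroup_union_subgroup[OF C])
  have HC: "H \<subseteq> \<Union>C"
    by (rule subset_Union_FactGroup_subgroup[OF C])
  have card_UC: "card (\<Union>C) = card C * card H"
    using group.lagrange[OF subgroup_imp_group[OF UC] subgroup_incl[OF is_subgroup UC HC]]
      factgroup_subgroup_union_factor[OF C] by (simp add: order_def)
  have QC: "order ((G Mod H) Mod C) * card C = order (G Mod H)"
    using Q.lagrange[OF C] by (simp only: order_FactGroup)
  have "order (G Mod \<Union>C) * card (\<Union>C) = order G"
    using lagrange[OF UC] by (simp only: order_FactGroup)
  also have "\<dots> = order (G Mod H) * card H"
    using lagrange[OF is_subgroup] by (simp only: order_FactGroup)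
  also have "\<dots> = order ((G Mod H) Mod C) * card (\<Union>C)"
    using QC card_UC by (simp add: mult.assoc[symmetric])
  finally have "order (G Mod \<Union>C) * card (\<Union>C) = order ((G Mod H) Mod C) * card (\<Union>C)" .
  moreover have "card (\<Union>C) > 0"
    using finite_subset[OF subgroup.subset[OF UC] fin] subgroup.one_closed[OF UC]
    by (auto simp: card_gt_0_iff)
  ultimately show ?thesis by simp
qed

lemma FactGroup_restrict:
  assumes "subgroup K (G Mod H)"
  shows "(G Mod H)\<lparr>carrier := K\<rparr> = G\<lparr>carrier := \<Union>K\<rparr> Mod H"
proof -
  have "rcosets\<^bsub>G\<lparr>carrier := \<Union>K\<rparr>\<^esub> H = K"
    by (rule factgroup_subgroup_union_factor[OF assms, symmetric])
  then show ?thesis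
    by (simp add: FactGroup_def fun_eq_iff)
qed

end

lemma sigma_primary_cong_order:
  "order K1 = order K2 \<Longrightarrow> sigma_primary \<Sigma> K1 = sigma_primary \<Sigma> K2"
  unfolding sigma_primary_def pi_group_def by simp

definition sigma_subnormal_step :: "nat set set \<Rightarrow> ('a, 'b) monoid_scheme \<Rightarrow> 'a set \<Rightarrow> 'a set \<Rightarrow> bool"
  where "sigma_subnormal_step \<Sigma> G A B \<longleftrightarrow> A \<subseteq> B \<and>
    (A \<lhd> G\<lparr>carrier := B\<rparr> \<or> sigma_primary \<Sigma> (G\<lparr>carrier := B\<rparr> Mod core (G\<lparr>carrier := B\<rparr>) A))"

lemma sigma_subnormal_iff_chain:
  "sigma_subnormal \<Sigma> G A \<longleftrightarrow> (\<exists>n f. f 0 = A \<and> f n = carrier G \<and> (\<forall>i\<le>n. subgroup (f i) G) \<and>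
     (\<forall>i<n. sigma_subnormal_step \<Sigma> G (f i) (f (Suc i))))"
  unfolding sigma_subnormal_def sigma_subnormal_step_def by simp

lemma sigma_subnormal_step_restrict:
  "sigma_subnormal_step \<Sigma> (G\<lparr>carrier := K\<rparr>) A B \<longleftrightarrow> sigma_subnormal_step \<Sigma> G A B"
  by (simp add: sigma_subnormal_step_def)

lemma (in group) sigma_subnormal_trans:
  assumes K: "subgroup K G" and "sigma_subnormal \<Sigma> G K"
    and "sigma_subnormal \<Sigma> (G\<lparr>carrier := K\<rparr>) A"
  shows "sigma_subnormal \<Sigma> G A"
proof -
  obtain n1 f1 where f1: "f1 0 = A" "f1 n1 = K" "\<forall>i\<le>n1. subgroup (f1 i) (G\<lparr>carrier := K\<rparr>)"
    "\<forall>i<n1. sigma_subnormal_step \<Sigma> G (f1 i) (f1 (Suc i))"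
    using assms(3) unfolding sigma_subnormal_iff_chain sigma_subnormal_step_restrict by auto
  obtain n2 f2 where f2: "f2 0 = K" "f2 n2 = carrier G" "\<forall>i\<le>n2. subgroup (f2 i) G"
    "\<forall>i<n2. sigma_subnormal_step \<Sigma> G (f2 i) (f2 (Suc i))"
    using assms(2) unfolding sigma_subnormal_iff_chain by blast
  define f where "f i = (if i \<le> n1 then f1 i else f2 (i - n1))" for i
  have f_high: "f i = f2 (i - n1)" if "n1 \<le> i" for i
    using that f1(2) f2(1) unfolding f_def by (cases "i = n1") auto
  show ?thesis
    unfolding sigma_subnormal_iff_chain
  proof (intro exI conjI allI impI)
    show "f 0 = A" using f1(1) by (simp add: f_def)
    show "f (n1 + n2) = carrier G" using f_high[of "n1 + n2"] f2(2) by simp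
  next
    fix i assume "i \<le> n1 + n2"
    then show "subgroup (f i) G"
      using f1(3) f2(3) incl_subgroup[OF K] f_high[of i] by (cases "i \<le> n1") (auto simp: f_def)
  next
    fix i assume "i < n1 + n2"
    then show "sigma_subnormal_step \<Sigma> G (f i) (f (Suc i))"
    proof (cases "Suc i \<le> n1")
      case True
      then show ?thesis using f1(4) by (simp add: f_def)
    next
      case False
      then have "f i = f2 (i - n1)" "f (Suc i) = f2 (Suc (i - n1))" "i - n1 < n2"
        using f_high[of i] f_high[of "Suc i"] \<open>i < n1 + n2\<close> by (auto simp: Suc_diff_le)
      then show ?thesis using f2(4) by simp
    qed
  qed
qed

context normal
begin

lemma normal_or_sigma_primary_Union:
  assumes fin: "finite (carrier G)" and A: "subgroup A (G Mod H)"
    and "A \<lhd> G Mod H \<or> sigma_primary \<Sigma> ((G Mod H) Mod core (G Mod H) A)"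
  shows "\<Union>A \<lhd> G \<or> sigma_primary \<Sigma> (G Mod core G (\<Union>A))"
proof -
  interpret Q: group "G Mod H" by (rule factorgroup_is_group)
  have "order (G Mod core G (\<Union>A)) = order ((G Mod H) Mod core (G Mod H) A)"
    using order_FactGroup_Union[OF fin Q.subgroup_core[OF A]] core_Union[OF A] by simp
  then show ?thesis
    using assms(3) factgroup_subgroup_union_normal sigma_primary_cong_order by metis
qed

lemma sigma_subnormal_step_Union:
  assumes fin: "finite (carrier G)" and A: "subgroup A (G Mod H)" and B: "subgroup B (G Mod H)"
    and step: "sigma_subnormal_step \<Sigma> (G Mod H) A B"
  shows "sigma_subnormal_step \<Sigma> G (\<Union>A) (\<Union>B)"
proof -
  interpret Q: group "G Mod H" by (rule factorgroup_is_group)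
  let ?GB = "G\<lparr>carrier := \<Union>B\<rparr>"
  have UB: "subgroup (\<Union>B) G"
    by (rule factgroup_subgroup_union_subgroup[OF B])
  have "H \<lhd> G"
    by (intro normal.intro subgroup_axioms group_axioms normal_axioms)
  then have HB: "H \<lhd> ?GB"
    using normal_restrict_supergroup[OF UB _ subset_Union_FactGroup_subgroup[OF B]] by blast
  have AB: "A \<subseteq> B"
    using step by (simp add: sigma_subnormal_step_def)
  have "subgroup A (?GB Mod H)"
    using Q.subgroup_incl[OF A B AB] FactGroup_restrict[OF B] by simp
  moreover have "finite (carrier ?GB)"
    using finite_subset[OF subgroup.subset[OF UB] fin] by simp
  moreover have "A \<lhd> ?GB Mod H \<or> sigma_primary \<Sigma> ((?GB Mod H) Mod core (?GB Mod H) A)"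
    using step FactGroup_restrict[OF B] by (simp add: sigma_subnormal_step_def)
  ultimately have "\<Union>A \<lhd> ?GB \<or> sigma_primary \<Sigma> (?GB Mod core ?GB (\<Union>A))"
    using normal.normal_or_sigma_primary_Union[OF HB] by blast
  then show ?thesis
    using AB by (auto simp: sigma_subnormal_step_def)
qed

lemma sigma_subnormal_Union:
  assumes fin: "finite (carrier G)" and "sigma_subnormal \<Sigma> (G Mod H) A"
  shows "sigma_subnormal \<Sigma> G (\<Union>A)"
proof -
  obtain n f where f: "f 0 = A" "f n = carrier (G Mod H)" "\<forall>i\<le>n. subgroup (f i) (G Mod H)"
    "\<forall>i<n. sigma_subnormal_step \<Sigma> (G Mod H) (f i) (f (Suc i))"
    using assms(2) unfolding sigma_subnormal_iff_chain by blast
  show ?thesis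
    unfolding sigma_subnormal_iff_chain
  proof (intro exI conjI allI impI)
    show "\<Union>(f 0) = \<Union>A" using f(1) by simp
    show "\<Union>(f n) = carrier G"
      using f(2) rcosets_part_G[OF is_subgroup] by (simp add: FactGroup_def)
  next
    fix i assume "i \<le> n"
    then show "subgroup (\<Union>(f i)) G"
      using f(3) factgroup_subgroup_union_subgroup by blast
  next
    fix i assume "i < n"
    then show "sigma_subnormal_step \<Sigma> G (\<Union>(f i)) (\<Union>(f (Suc i)))"
      using f(3,4) sigma_subnormal_step_Union[OF fin] by simp
  qed
qed

lemma sigma_quasinormal_Union:
  assumes "finite (carrier G)" and "sigma_quasinormal \<Sigma> (G Mod H) A"
  shows "sigma_quasinormal \<Sigma> G (\<Union>A)"
  using assms factgroup_subgroup_union_subgroup sigma_subnormal_Union modular_subgroup_Union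
  unfolding sigma_quasinormal_def by blast

end

theorem lemma2p4:
  fixes G :: "('a, 'b) monoid_scheme" and \<Sigma> :: "nat set set" and N :: "'a set"
  assumes "sigma_partition \<Sigma>"
    and "group G"
    and "finite (carrier G)"
    and "N \<lhd> G"
    and "QsigmaT \<Sigma> G"
  shows "QsigmaT \<Sigma> (G Mod N)"
  unfolding QsigmaT_def
proof (intro allI impI)
  interpret N: normal N G by (rule assms(4))
  interpret Q: group "G Mod N" by (rule N.factorgroup_is_group)
  fix H K
  assume qK: "sigma_quasinormal \<Sigma> (G Mod N) K"
    and qH: "sigma_quasinormal \<Sigma> ((G Mod N)\<lparr>carrier := K\<rparr>) H"
  have K: "subgroup K (G Mod N)"
    using qK by (simp add: sigma_quasinormal_def)
  have UK: "subgroup (\<Union>K) G"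
    by (rule N.factgroup_subgroup_union_subgroup[OF K])
  have "N \<lhd> G\<lparr>carrier := \<Union>K\<rparr>"
    by (rule N.normal_restrict_supergroup[OF UK assms(4) N.subset_Union_FactGroup_subgroup[OF K]])
  then have "sigma_quasinormal \<Sigma> (G\<lparr>carrier := \<Union>K\<rparr>) (\<Union>H)"
    using normal.sigma_quasinormal_Union qH N.FactGroup_restrict[OF K]
      finite_subset[OF subgroup.subset[OF UK] assms(3)] by fastforce
  moreover have "sigma_quasinormal \<Sigma> G (\<Union>K)"
    by (rule N.sigma_quasinormal_Union[OF assms(3) qK])
  ultimately have "modular_subgroup G (\<Union>H)"
    using assms(5) unfolding QsigmaT_def sigma_quasinormal_def by blast
  moreover have H: "subgroup H (G Mod N)"
    using Q.incl_subgroup[OF K] qH by (simp add: sigma_quasinormal_def)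
  ultimately show "sigma_quasinormal \<Sigma> (G Mod N) H"
    using N.modular_subgroup_FactGroupI Q.sigma_subnormal_trans[OF K] qK qH
    unfolding sigma_quasinormal_def by blast
qed

end
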